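(* Let $\mathbf P=(P,\leq,{}',0,1)$ be an orthogonal lub-complete poset and $\rightarrow\in\{\rightarrow_C,\rightarrow_K,\rightarrow_N,\rightarrow_S,\rightarrow_D\}$. Then the following conditions are equivalent: (i) (MPO) $x\leq y$ and $x\rightarrow y\leq u\rightarrow v$ imply $u\leq v$, for all $x,y,u,v\in P$. (ii) (OP) $x\leq y$ if and only if $x\rightarrow y=1$, for all $x,y\in P$.
   Context: $(P,\leq,{}',0,1)$ is a bounded poset with an antitone involution ${}'$; orthogonal means $x\leq y'$ implies $x\vee y$ exists; lub-complete means for every lower bound $x$ of a finite subset $M$ there is a maximal lower bound of $M$ above $x$. For $A\subseteq P$, $L(A)$, $U(A)$ are the lower and upper cones, $\mathrm{Max}\,A$, $\mathrm{Min}\,A$ the sets of maximal and minimal elements; joins/meets with sets are elementwise. The implications (operators $P^2\to 2^P$) are: $x\rightarrow_C y:=\mathrm{Min}\,U(x',y)$; $x\rightarrow_K y:=\mathrm{Max}\,L(x',y)\vee \mathrm{Max}\,L(x',y')\vee (x\wedge \mathrm{Min}\,U(x',y))$; $x\rightarrow_N y:=y'\rightarrow_K x'$; $x\rightarrow_S y:=x'\vee \mathrm{Max}\,L(x,y)$; $x\rightarrow_D y:=y'\rightarrow_S x'=y\vee \mathrm{Max}\,L(x',y')$. For sets, $A\leq B$ means $a\leq b$ for all $a\in A,b\in B$; "$=1$" means equal to $\{1\}$. *)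

theory Defs
  imports Main
begin

(* The poset P is the whole carrier type 'a (class order); ' is the function c. *)

definition LC :: "'a::order set \<Rightarrow> 'a set" where
  "LC A = {x. \<forall>a\<in>A. x \<le> a}"

definition UC :: "'a::order set \<Rightarrow> 'a set" where
  "UC A = {x. \<forall>a\<in>A. a \<le> x}"

definition MaxE :: "'a::order set \<Rightarrow> 'a set" where
  "MaxE A = {x\<in>A. \<forall>y\<in>A. x \<le> y \<longrightarrow> y = x}"

definition MinE :: "'a::order set \<Rightarrow> 'a set" where
  "MinE A = {x\<in>A. \<forall>y\<in>A. y \<le> x \<longrightarrow> y = x}"

definition is_join :: "'a::order \<Rightarrow> 'a \<Rightarrow> 'a \<Rightarrow> bool" where
  "is_join x y z \<longleftrightarrow> x \<le> z \<and> y \<le> z \<and> (\<forall>w. x \<le> w \<and> y \<le> w \<longrightarrow> z \<le> w)"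

definition is_meet :: "'a::order \<Rightarrow> 'a \<Rightarrow> 'a \<Rightarrow> bool" where
  "is_meet x y z \<longleftrightarrow> z \<le> x \<and> z \<le> y \<and> (\<forall>w. w \<le> x \<and> w \<le> y \<longrightarrow> w \<le> z)"

definition join_set :: "'a::order set \<Rightarrow> 'a set \<Rightarrow> 'a set" where
  "join_set A B = {z. \<exists>a\<in>A. \<exists>b\<in>B. is_join a b z}"

definition meet_set :: "'a::order set \<Rightarrow> 'a set \<Rightarrow> 'a set" where
  "meet_set A B = {z. \<exists>a\<in>A. \<exists>b\<in>B. is_meet a b z}"

definition set_le :: "'a::order set \<Rightarrow> 'a set \<Rightarrow> bool" where
  "set_le A B \<longleftrightarrow> (\<forall>a\<in>A. \<forall>b\<in>B. a \<le> b)"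

definition bounded_inv_poset :: "('a::order \<Rightarrow> 'a) \<Rightarrow> 'a \<Rightarrow> 'a \<Rightarrow> bool" where
  "bounded_inv_poset c zero one \<longleftrightarrow>
     (\<forall>x. zero \<le> x \<and> x \<le> one) \<and>
     (\<forall>x y. x \<le> y \<longrightarrow> c y \<le> c x) \<and> (\<forall>x. c (c x) = x)"

definition orthogonal :: "('a::order \<Rightarrow> 'a) \<Rightarrow> bool" where
  "orthogonal c \<longleftrightarrow> (\<forall>x y. x \<le> c y \<longrightarrow> (\<exists>z. is_join x y z))"

definition lub_complete :: "'a::order itself \<Rightarrow> bool" where
  "lub_complete _ \<longleftrightarrow> (\<forall>M::'a set. finite M \<longrightarrow> (\<forall>x\<in>LC M. \<exists>y\<in>MaxE (LC M). x \<le> y))"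

definition imp_C :: "('a::order \<Rightarrow> 'a) \<Rightarrow> 'a \<Rightarrow> 'a \<Rightarrow> 'a set" where
  "imp_C c x y = MinE (UC {c x, y})"

definition imp_K :: "('a::order \<Rightarrow> 'a) \<Rightarrow> 'a \<Rightarrow> 'a \<Rightarrow> 'a set" where
  "imp_K c x y = join_set (join_set (MaxE (LC {c x, y})) (MaxE (LC {c x, c y})))
                          (meet_set {x} (MinE (UC {c x, y})))"

definition imp_N :: "('a::order \<Rightarrow> 'a) \<Rightarrow> 'a \<Rightarrow> 'a \<Rightarrow> 'a set" where
  "imp_N c x y = imp_K c (c y) (c x)"

definition imp_S :: "('a::order \<Rightarrow> 'a) \<Rightarrow> 'a \<Rightarrow> 'a \<Rightarrow> 'a set" where
  "imp_S c x y = join_set {c x} (MaxE (LC {x, y}))"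

definition imp_D :: "('a::order \<Rightarrow> 'a) \<Rightarrow> 'a \<Rightarrow> 'a \<Rightarrow> 'a set" where
  "imp_D c x y = imp_S c (c y) (c x)"

datatype imp_kind = ImpC | ImpK | ImpN | ImpS | ImpD

fun imp :: "imp_kind \<Rightarrow> ('a::order \<Rightarrow> 'a) \<Rightarrow> 'a \<Rightarrow> 'a \<Rightarrow> 'a set" where
  "imp ImpC c = imp_C c"
| "imp ImpK c = imp_K c"
| "imp ImpN c = imp_N c"
| "imp ImpS c = imp_S c"
| "imp ImpD c = imp_D c"

end

theory Submission
  imports Defs
begin

text \<open>Each of the five implications satisfies \<open>1 \<rightarrow> v = {v}\<close>, is a singleton whenever
  \<open>x \<le> y\<close>, and is never empty (elementwise joins and meets keep only those that exist, so this
  is where orthogonality and lub-completeness enter). These facts alone give the equivalence: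
  under (MPO), \<open>x \<le> y\<close> and \<open>x \<rightarrow> y = {m} \<le> {m} = 1 \<rightarrow> m\<close> force \<open>m = 1\<close>, while
  \<open>x \<rightarrow> y = {1}\<close> gives \<open>x \<rightarrow> x \<le> x \<rightarrow> y\<close>; under (OP), \<open>x \<rightarrow> y = {1} \<le> u \<rightarrow> v\<close>
  forces the nonempty set \<open>u \<rightarrow> v\<close> to be \<open>{1}\<close>.\<close>

lemma MPO_iff_OP:
  fixes imp :: "'a::order \<Rightarrow> 'a \<Rightarrow> 'a set"
  assumes le_one: "\<And>x. x \<le> one"
    and imp_one: "\<And>v. imp one v = {v}"
    and imp_singleton: "\<And>x y. x \<le> y \<Longrightarrow> \<exists>m. imp x y = {m}"
    and imp_nonempty: "\<And>u v. imp u v \<noteq> {}"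
  shows "(\<forall>x y u v. x \<le> y \<and> set_le (imp x y) (imp u v) \<longrightarrow> u \<le> v)
     \<longleftrightarrow> (\<forall>x y. x \<le> y \<longleftrightarrow> imp x y = {one})"
proof
  assume MPO: "\<forall>x y u v. x \<le> y \<and> set_le (imp x y) (imp u v) \<longrightarrow> u \<le> v"
  show "\<forall>x y. x \<le> y \<longleftrightarrow> imp x y = {one}"
  proof (intro allI iffI)
    fix x y :: 'a
    assume "x \<le> y"
    then obtain m where m: "imp x y = {m}" using imp_singleton by blast
    have "set_le (imp x y) (imp one m)"
      unfolding m imp_one set_le_def by simp
    then have "one \<le> m" using MPO \<open>x \<le> y\<close> by blast
    then show "imp x y = {one}" using m le_one order_antisym by blast
  next
    fix x y :: 'a
    assume "imp x y = {one}"
    then have "set_le (imp x x) (imp x y)" unfolding set_le_def using le_one by simp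
    then show "x \<le> y" using MPO by blast
  qed
next
  assume OP: "\<forall>x y. x \<le> y \<longleftrightarrow> imp x y = {one}"
  show "\<forall>x y u v. x \<le> y \<and> set_le (imp x y) (imp u v) \<longrightarrow> u \<le> v"
  proof (intro allI impI)
    fix x y u v :: 'a
    assume "x \<le> y \<and> set_le (imp x y) (imp u v)"
    then have "\<forall>b\<in>imp u v. one \<le> b" using OP unfolding set_le_def by simp
    then have "imp u v = {one}" using imp_nonempty le_one order_antisym by blast
    then show "u \<le> v" using OP by blast
  qed
qed

lemma is_join_unique: "is_join a b z \<Longrightarrow> is_join a b z' \<Longrightarrow> z = (z'::'a::order)"
  unfolding is_join_def by (meson order_antisym)

lemma is_meet_unique: "is_meet a b z \<Longrightarrow> is_meet a b z' \<Longrightarrow> z = (z'::'a::order)"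
  unfolding is_meet_def by (meson order_antisym)

lemma is_join_absorb1: "b \<le> a \<Longrightarrow> is_join a b (a::'a::order)"
  unfolding is_join_def by auto

lemma is_join_absorb2: "a \<le> b \<Longrightarrow> is_join a b (b::'a::order)"
  unfolding is_join_def by auto

lemma is_meet_absorb1: "a \<le> b \<Longrightarrow> is_meet a b (a::'a::order)"
  unfolding is_meet_def by auto

lemma is_meet_absorb2: "b \<le> a \<Longrightarrow> is_meet a b (b::'a::order)"
  unfolding is_meet_def by auto

lemma join_set_singleton: "is_join a b z \<Longrightarrow> join_set {a} {b} = {z::'a::order}"
  unfolding join_set_def using is_join_unique by blast

lemma meet_set_singleton: "is_meet a b z \<Longrightarrow> meet_set {a} {b} = {z::'a::order}"
  unfolding meet_set_def using is_meet_unique by blast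

lemma join_setI: "a \<in> A \<Longrightarrow> b \<in> B \<Longrightarrow> is_join a b z \<Longrightarrow> z \<in> join_set A (B::'a::order set)"
  unfolding join_set_def by blast

lemma meet_setI: "a \<in> A \<Longrightarrow> b \<in> B \<Longrightarrow> is_meet a b z \<Longrightarrow> z \<in> meet_set A (B::'a::order set)"
  unfolding meet_set_def by blast

lemma LC_pair: "LC {a, b} = {w. w \<le> a \<and> w \<le> (b::'a::order)}"
  unfolding LC_def by auto

lemma UC_pair: "UC {a, b} = {w. a \<le> w \<and> (b::'a::order) \<le> w}"
  unfolding UC_def by auto

lemma MaxE_LC_pair_meet: "is_meet a b m \<Longrightarrow> MaxE (LC {a, b}) = {m::'a::order}"
  unfolding MaxE_def LC_pair is_meet_def by (auto intro: order_antisym)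

lemma MinE_UC_pair_join: "is_join a b m \<Longrightarrow> MinE (UC {a, b}) = {m::'a::order}"
  unfolding MinE_def UC_pair is_join_def by (auto intro: order_antisym)

locale inv_poset =
  fixes c :: "'a::order \<Rightarrow> 'a" and zero one :: 'a
  assumes bounded_inv: "bounded_inv_poset c zero one"
begin

lemma c_c [simp]: "c (c x) = x"
  using bounded_inv unfolding bounded_inv_poset_def by blast

lemma c_antitone: "x \<le> y \<Longrightarrow> c y \<le> c x"
  using bounded_inv unfolding bounded_inv_poset_def by blast

lemma c_le_c_iff [simp]: "c x \<le> c y \<longleftrightarrow> y \<le> x"
  by (metis c_antitone c_c)

lemma le_c_commute: "x \<le> c y \<longleftrightarrow> y \<le> c x"
  by (metis c_le_c_iff c_c)

lemma c_le_commute: "c x \<le> y \<longleftrightarrow> c y \<le> x"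
  by (metis c_le_c_iff c_c)

lemma zero_le: "zero \<le> x"
  using bounded_inv unfolding bounded_inv_poset_def by blast

lemma le_one: "x \<le> one"
  using bounded_inv unfolding bounded_inv_poset_def by blast

lemma c_one [simp]: "c one = zero"
  by (metis c_le_c_iff c_c le_one zero_le order_antisym)

lemma c_zero [simp]: "c zero = one"
  by (metis c_c c_one)

lemma is_meet_c_join: "is_join (c x) (c y) z \<Longrightarrow> is_meet x y (c z)"
  unfolding is_join_def is_meet_def by (metis c_le_c_iff c_c)

lemma imp_C_one: "imp_C c one v = {v}"
  unfolding imp_C_def c_one by (rule MinE_UC_pair_join[OF is_join_absorb2[OF zero_le]])

lemma imp_K_one: "imp_K c one v = {v}"
proof -
  have "MaxE (LC {zero, w}) = {zero}" for w by (rule MaxE_LC_pair_meet[OF is_meet_absorb1[OF zero_le]])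
  moreover have "MinE (UC {zero, v}) = {v}" by (rule MinE_UC_pair_join[OF is_join_absorb2[OF zero_le]])
  moreover have "meet_set {one} {v} = {v}" by (rule meet_set_singleton[OF is_meet_absorb2[OF le_one]])
  moreover have "join_set {zero} {w} = {w}" for w by (rule join_set_singleton[OF is_join_absorb2[OF zero_le]])
  ultimately show ?thesis unfolding imp_K_def c_one by simp
qed

lemma imp_S_one: "imp_S c one v = {v}"
proof -
  have "MaxE (LC {one, v}) = {v}" by (rule MaxE_LC_pair_meet[OF is_meet_absorb2[OF le_one]])
  then show ?thesis
    unfolding imp_S_def c_one using join_set_singleton[OF is_join_absorb2[OF zero_le]] by simp
qed

lemma imp_D_one: "imp_D c one v = {v}"
proof -
  have "MaxE (LC {c v, zero}) = {zero}" by (rule MaxE_LC_pair_meet[OF is_meet_absorb2[OF zero_le]])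
  then show ?thesis
    unfolding imp_D_def imp_S_def c_c c_one using join_set_singleton[OF is_join_absorb1[OF zero_le]] by simp
qed

end

locale orth_poset = inv_poset +
  assumes orth: "orthogonal c"
begin

lemma is_join_exI: "x \<le> c y \<Longrightarrow> \<exists>z. is_join x y z"
  using orth unfolding orthogonal_def by blast

lemma is_meet_exI: "c x \<le> y \<Longrightarrow> \<exists>z. is_meet x y z"
proof -
  assume "c x \<le> y"
  then have "c x \<le> c (c y)" by simp
  then obtain z where "is_join (c x) (c y) z" using is_join_exI by blast
  then show ?thesis using is_meet_c_join by blast
qed

lemma imp_N_one: "imp_N c one v = {v}"
proof -
  obtain q where q: "is_meet (c v) v q" using is_meet_exI[of "c v" v] by auto
  then have "q \<le> v" unfolding is_meet_def by blast
  have "MaxE (LC {v, zero}) = {zero}" by (rule MaxE_LC_pair_meet[OF is_meet_absorb2[OF zero_le]])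
  moreover have "MaxE (LC {v, one}) = {v}" by (rule MaxE_LC_pair_meet[OF is_meet_absorb1[OF le_one]])
  moreover have "MinE (UC {v, zero}) = {v}" by (rule MinE_UC_pair_join[OF is_join_absorb1[OF zero_le]])
  moreover have "join_set {zero} {v} = {v}" by (rule join_set_singleton[OF is_join_absorb2[OF zero_le]])
  ultimately show ?thesis
    unfolding imp_N_def imp_K_def c_c c_one
    using meet_set_singleton[OF q] join_set_singleton[OF is_join_absorb1[OF \<open>q \<le> v\<close>]] by simp
qed

lemma imp_one: "imp k c one v = {v}"
  by (cases k) (simp_all add: imp_C_one imp_K_one imp_N_one imp_S_one imp_D_one)

lemma imp_K_joins_exist:
  assumes "a \<le> c x" "a \<le> y" "b \<le> c x" "b \<le> c y" "c x \<le> m"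
  shows "\<exists>r q s. is_join a b r \<and> is_meet x m q \<and> is_join r q s"
proof -
  have "a \<le> c b" using assms(2,4) le_c_commute order_trans by metis
  then obtain r where r: "is_join a b r" using is_join_exI by blast
  obtain q where q: "is_meet x m q" using is_meet_exI assms(5) by blast
  have "r \<le> c x" using r assms(1,3) unfolding is_join_def by blast
  also have "c x \<le> c q" using q unfolding is_meet_def by simp
  finally obtain s where "is_join r q s" using is_join_exI by blast
  then show ?thesis using r q by blast
qed

lemma MinE_UC_unique:
  assumes "x \<le> y" and m: "m \<in> MinE (UC {c x, y})" and m': "m' \<in> MinE (UC {c x, y})"
  shows "m = m'"
proof -
  have ub: "c x \<le> m" "y \<le> m" "c x \<le> m'" "y \<le> m'" using m m' unfolding MinE_def UC_pair by auto
  then have "c m \<le> x" "c m' \<le> x" using c_le_commute by blast+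
  then have "c m \<le> c (c m')" using assms(1) ub(4) by (metis c_c order_trans)
  then obtain j where j: "is_join (c m) (c m') j" using is_join_exI by blast
  have "c m \<le> c y" "c m' \<le> c y" using ub by simp_all
  then have "j \<le> x" "j \<le> c y" using j \<open>c m \<le> x\<close> \<open>c m' \<le> x\<close> unfolding is_join_def by blast+
  then have "c j \<in> UC {c x, y}" unfolding UC_pair using le_c_commute by auto
  moreover have "c j \<le> m" "c j \<le> m'" using j c_le_commute unfolding is_join_def by blast+
  ultimately show ?thesis using m m' unfolding MinE_def by blast
qed

lemma imp_S_singleton:
  assumes "x \<le> y"
  shows "\<exists>m. imp_S c x y = {m}"
proof -
  obtain z where "is_join (c x) x z" using is_join_exI[of "c x" x] by auto
  then show ?thesis
    unfolding imp_S_def MaxE_LC_pair_meet[OF is_meet_absorb1[OF assms]] by (blast dest: join_set_singleton)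
qed

end

locale orth_lub_poset = orth_poset c zero one
  for c :: "'a::order \<Rightarrow> 'a" and zero one :: 'a +
  assumes lub: "lub_complete TYPE('a)"
begin

lemma lub_completeD: "finite (M :: 'a set) \<Longrightarrow> x \<in> LC M \<Longrightarrow> \<exists>y\<in>MaxE (LC M). x \<le> y"
  using lub unfolding lub_complete_def by blast

lemma MaxE_LC_pair_nonempty: "\<exists>w. w \<in> MaxE (LC {a, b :: 'a})"
proof -
  have "zero \<in> LC {a, b}" unfolding LC_pair using zero_le by auto
  then show ?thesis using lub_completeD[of "{a, b}"] by blast
qed

lemma MinE_UC_pair_nonempty: "\<exists>m. m \<in> MinE (UC {a, b :: 'a})"
proof -
  obtain w where "w \<in> MaxE (LC {c a, c b})" using MaxE_LC_pair_nonempty by blast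
  then have w: "w \<le> c a" "w \<le> c b"
    and w_max: "\<And>y. y \<le> c a \<Longrightarrow> y \<le> c b \<Longrightarrow> w \<le> y \<Longrightarrow> y = w"
    unfolding MaxE_def LC_pair by auto
  have "y = c w" if "a \<le> y" "b \<le> y" "y \<le> c w" for y
  proof -
    have "c y = w" using w_max that le_c_commute by simp
    then show ?thesis by auto
  qed
  moreover have "a \<le> c w" "b \<le> c w" using w le_c_commute by blast+
  ultimately have "c w \<in> MinE (UC {a, b})" unfolding MinE_def UC_pair by blast
  then show ?thesis by blast
qed

lemma MinE_UC_singleton: "x \<le> y \<Longrightarrow> \<exists>m. MinE (UC {c x, y}) = {m}"
  using MinE_UC_pair_nonempty MinE_UC_unique by blast

lemma imp_K_singleton:
  assumes "x \<le> y"
  shows "\<exists>s. imp_K c x y = {s}"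
proof -
  obtain p where p: "is_meet (c x) y p" using is_meet_exI[of "c x" y] assms by auto
  then have "p \<le> c x" "p \<le> y" unfolding is_meet_def by blast+
  have "c y \<le> c x" using assms by simp
  obtain m where m: "MinE (UC {c x, y}) = {m}" using MinE_UC_singleton assms by blast
  then have "c x \<le> m" unfolding MinE_def UC_pair by blast
  then obtain r q s where "is_join p (c y) r" "is_meet x m q" "is_join r q s"
    using imp_K_joins_exist \<open>p \<le> c x\<close> \<open>p \<le> y\<close> \<open>c y \<le> c x\<close> by blast
  then have "imp_K c x y = {s}"
    unfolding imp_K_def MaxE_LC_pair_meet[OF p] MaxE_LC_pair_meet[OF is_meet_absorb2[OF \<open>c y \<le> c x\<close>]] m
    by (simp add: join_set_singleton meet_set_singleton)
  then show ?thesis by blast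
qed

lemma imp_K_nonempty: "imp_K c u v \<noteq> {}"
proof -
  obtain a where a: "a \<in> MaxE (LC {c u, v})" using MaxE_LC_pair_nonempty by blast
  obtain b where b: "b \<in> MaxE (LC {c u, c v})" using MaxE_LC_pair_nonempty by blast
  obtain m where m: "m \<in> MinE (UC {c u, v})" using MinE_UC_pair_nonempty by blast
  have "a \<le> c u" "a \<le> v" "b \<le> c u" "b \<le> c v" "c u \<le> m"
    using a b m unfolding MaxE_def MinE_def LC_pair UC_pair by auto
  then obtain r q s where r: "is_join a b r" and q: "is_meet u m q" and s: "is_join r q s"
    using imp_K_joins_exist by blast
  have "r \<in> join_set (MaxE (LC {c u, v})) (MaxE (LC {c u, c v}))" by (rule join_setI[OF a b r])
  moreover have "q \<in> meet_set {u} (MinE (UC {c u, v}))" by (rule meet_setI[OF _ m q]) simp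
  ultimately have "s \<in> imp_K c u v" unfolding imp_K_def using s by (rule join_setI)
  then show ?thesis by blast
qed

lemma imp_S_nonempty: "imp_S c u v \<noteq> {}"
proof -
  obtain w where w: "w \<in> MaxE (LC {u, v})" using MaxE_LC_pair_nonempty by blast
  then have "c u \<le> c w" unfolding MaxE_def LC_pair by simp
  then obtain z where "is_join (c u) w z" using is_join_exI by blast
  then have "z \<in> imp_S c u v" unfolding imp_S_def using w by (blast intro: join_setI)
  then show ?thesis by blast
qed

lemma imp_singleton:
  assumes "x \<le> y"
  shows "\<exists>m. imp k c x y = {m}"
proof (cases k)
  case ImpC
  then show ?thesis using MinE_UC_singleton assms by (simp add: imp_C_def)
next
  case ImpK
  then show ?thesis using imp_K_singleton assms by simp
next
  case ImpN
  then show ?thesis using imp_K_singleton[of "c y" "c x"] assms by (simp add: imp_N_def)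
next
  case ImpS
  then show ?thesis using imp_S_singleton assms by simp
next
  case ImpD
  then show ?thesis using imp_S_singleton[of "c y" "c x"] assms by (simp add: imp_D_def)
qed

lemma imp_nonempty: "imp k c u v \<noteq> {}"
proof (cases k)
  case ImpC
  obtain m where "m \<in> MinE (UC {c u, v})" using MinE_UC_pair_nonempty by blast
  then show ?thesis using ImpC by (auto simp: imp_C_def)
next
  case ImpK
  then show ?thesis using imp_K_nonempty by simp
next
  case ImpN
  then show ?thesis using imp_K_nonempty by (simp add: imp_N_def)
next
  case ImpS
  then show ?thesis using imp_S_nonempty by simp
next
  case ImpD
  then show ?thesis using imp_S_nonempty by (simp add: imp_D_def)
qed

end

theorem theorem10:
  fixes c :: "'a::order \<Rightarrow> 'a" and zero one :: 'a and k :: imp_kind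
  assumes "bounded_inv_poset c zero one"
    and "orthogonal c"
    and "lub_complete TYPE('a)"
  shows "(\<forall>x y u v. x \<le> y \<and> set_le (imp k c x y) (imp k c u v) \<longrightarrow> u \<le> v)
     \<longleftrightarrow> (\<forall>x y. x \<le> y \<longleftrightarrow> imp k c x y = {one})"
proof -
  interpret orth_lub_poset c zero one
    using assms by unfold_locales
  show ?thesis
    by (rule MPO_iff_OP[where imp = "imp k c", OF le_one imp_one imp_singleton imp_nonempty])
qed

end
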